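(* Let $p=\sum_{k=1}^n \lambda_k p_k$ be a mixture density on $\mathbb{R}^d$, where $\lambda_k\ge 0$, $\sum_k\lambda_k=1$, each $p_k$ is a probability density on $\mathbb{R}^d$, and for two indices $i\ne j$ with $\lambda_i+\lambda_j>0$ the components $p_i,p_j$ are the Gaussian densities of $\mathcal{N}(\mu_i,\Sigma_i)$ and $\mathcal{N}(\mu_j,\Sigma_j)$. Set $\lambda_{ij}=\lambda_i+\lambda_j$, $\mu_{ij}=\frac{\lambda_i}{\lambda_{ij}}\mu_i+\frac{\lambda_j}{\lambda_{ij}}\mu_j$, $\Sigma_{ij}=\frac{1}{\lambda_{ij}}\big(\lambda_i\Sigma_i+\lambda_j\Sigma_j+\lambda_i\lambda_j(\mu_i-\mu_j)(\mu_i-\mu_j)^\top\big)$, let $p_{ij}$ be the density of $\mathcal{N}(\mu_{ij},\Sigma_{ij})$, and let $p_{app}=\sum_{k\ne i,j}\lambda_k p_k+\lambda_{ij}\,p_{ij}$ be the mixture obtained by merging components $i$ and $j$. Then $$d_{sKL}(p,p_{app})\ \le\ B_s(i,j):=\lambda_i\, d_{sKL}(p_i,p_{ij})+\lambda_j\, d_{sKL}(p_j,p_{ij}).$$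
   Context: For probability densities $p,q$ on $\mathbb{R}^d$, $d_{sKL}(p,q)=\int p\log\frac{p}{q}\,\mathrm{d}x+\int q\log\frac{q}{p}\,\mathrm{d}x$ (symmetrized Kullback–Leibler divergence). In the paper the components are projected Gaussians (mixture of projected Gaussians) whose rotational parts have been transferred to a common tangent space, so that the two components to be merged and their merge are Gaussian densities on the same space $\mathbb{R}^d$. *)

theory Defs
  imports "HOL-Analysis.Analysis"
begin

definition prob_density :: "(real^'n::finite \<Rightarrow> real) \<Rightarrow> bool" where
  "prob_density f \<longleftrightarrow> f \<in> borel_measurable lborel \<and> (\<forall>x. 0 \<le> f x)
      \<and> (\<integral>\<^sup>+ x. ennreal (f x) \<partial>lborel) = 1"

definition pos_def_mat :: "real^'n^'n \<Rightarrow> bool" where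
  "pos_def_mat S \<longleftrightarrow> transpose S = S \<and> (\<forall>v. v \<noteq> 0 \<longrightarrow> 0 < v \<bullet> (S *v v))"

definition gauss_density :: "real^'n \<Rightarrow> real^'n^'n \<Rightarrow> real^'n \<Rightarrow> real" where
  "gauss_density mu S x =
     exp (- (1/2) * ((x - mu) \<bullet> (matrix_inv S *v (x - mu))))
       / sqrt ((2 * pi) ^ CARD('n) * det S)"

definition outer :: "real^'n \<Rightarrow> real^'n \<Rightarrow> real^'n^'n" where
  "outer u v = (\<chi> a b. u $ a * v $ b)"

definition KL :: "(real^'n::finite \<Rightarrow> real) \<Rightarrow> (real^'n \<Rightarrow> real) \<Rightarrow> real" where
  "KL p q = (\<integral> x. p x * ln (p x / q x) \<partial>lborel)"

definition dsKL :: "(real^'n::finite \<Rightarrow> real) \<Rightarrow> (real^'n \<Rightarrow> real) \<Rightarrow> real" where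
  "dsKL p q = KL p q + KL q p"

end

(*
  p and p_app are mixtures with the same weights that differ only in components i and j,
  which p_app replaces by the merged Gaussian p_ij.  By the log-sum inequality (joint
  convexity of (a, b) \<mapsto> a ln (a / b)) each integrand of d_sKL(p, p_app) is bounded
  pointwise by the \<lambda>-weighted integrands of d_sKL(p_i, p_ij) and d_sKL(p_j, p_ij).
  Gaussian tails make the latter integrable; the former are then integrable too, being
  squeezed between p - p_app (resp. p_app - p) and that bound, so the bound integrates.
  The merged covariance is positive definite, so p_ij is a genuine Gaussian density.
*)

theory Submission
  imports Defs "HOL-Probability.Distributions"
begin

section \<open>The log-sum inequality and joint convexity of KL\<close>

lemma mult_ln_div_ge_tangent:
  fixes a b A B :: real
  assumes "0 \<le> a" "0 \<le> b" "b = 0 \<Longrightarrow> a = 0" "0 < A" "0 < B"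
  shows "a * ln (A / B) + a - b * A / B \<le> a * ln (a / b)"
proof (cases "a = 0")
  case False
  then have a: "0 < a" and b: "0 < b" using assms by force+
  have "ln ((b * A) / (a * B)) \<le> (b * A) / (a * B) - 1"
    using a b assms by (intro ln_le_minus_one) simp
  moreover have "ln ((b * A) / (a * B)) = ln (A / B) - ln (a / b)"
    using a b assms by (simp add: ln_div ln_mult)
  ultimately have "a * (ln (A / B) - ln (a / b)) \<le> a * ((b * A) / (a * B) - 1)"
    using a by (intro mult_left_mono) auto
  also have "\<dots> = b * A / B - a" using a assms by (simp add: field_simps)
  finally show ?thesis by (simp add: algebra_simps)
qed (use assms in simp)

lemma log_sum_inequality:
  fixes a b :: "'i \<Rightarrow> real"
  assumes "finite K" and "\<And>k. k \<in> K \<Longrightarrow> 0 \<le> a k" and "\<And>k. k \<in> K \<Longrightarrow> 0 \<le> b k"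
    and "\<And>k. k \<in> K \<Longrightarrow> b k = 0 \<Longrightarrow> a k = 0"
  shows "sum a K * ln (sum a K / sum b K) \<le> (\<Sum>k\<in>K. a k * ln (a k / b k))"
proof (cases "sum a K = 0")
  case True
  then have "\<forall>k\<in>K. a k = 0" using assms by (simp add: sum_nonneg_eq_0_iff)
  then show ?thesis using True by simp
next
  case False
  define A B where "A = sum a K" and "B = sum b K"
  have "0 \<le> A" "0 \<le> B" unfolding A_def B_def using assms by (simp_all add: sum_nonneg)
  then have "0 < A" using False unfolding A_def by simp
  moreover have "0 < B"
  proof (rule ccontr)
    assume "\<not> 0 < B"
    then have "\<forall>k\<in>K. b k = 0" using \<open>0 \<le> B\<close> assms unfolding B_def by (simp add: sum_nonneg_eq_0_iff)
    then show False using False assms by simp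
  qed
  ultimately have "(\<Sum>k\<in>K. a k * ln (A / B) + a k - b k * A / B) \<le> (\<Sum>k\<in>K. a k * ln (a k / b k))"
    using assms by (intro sum_mono mult_ln_div_ge_tangent) auto
  also have "(\<Sum>k\<in>K. a k * ln (A / B) + a k - b k * A / B) = A * ln (A / B) + A - B * A / B"
    unfolding A_def B_def by (simp add: sum.distrib sum_subtractf sum_distrib_right sum_divide_distrib)
  also have "\<dots> = A * ln (A / B)" using \<open>0 < B\<close> by simp
  finally show ?thesis unfolding A_def B_def .
qed

lemma mult_ln_div_self [simp]: "(x::real) * ln (x / x) = 0"
  by (cases "x = 0") simp_all

lemma KL_le_integral:
  fixes p q G :: "real^'n \<Rightarrow> real"
  assumes "integrable lborel p" "integrable lborel q" "integrable lborel G"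
    and "\<And>x. 0 \<le> p x" "\<And>x. 0 \<le> q x" "\<And>x. q x = 0 \<Longrightarrow> p x = 0"
    and le: "\<And>x. p x * ln (p x / q x) \<le> G x"
  shows "KL p q \<le> integral\<^sup>L lborel G"
proof -
  have ge: "p x - q x \<le> p x * ln (p x / q x)" for x
    using mult_ln_div_ge_tangent[of "p x" "q x" 1 1] assms by simp
  have [measurable]: "p \<in> borel_measurable lborel" "q \<in> borel_measurable lborel"
    using assms by (simp_all add: borel_measurable_integrable)
  have "integrable lborel (\<lambda>x. p x * ln (p x / q x))"
  proof (rule Bochner_Integration.integrable_bound)
    show "integrable lborel (\<lambda>x. \<bar>p x - q x\<bar> + \<bar>G x\<bar>)"
      using assms by (intro Bochner_Integration.integrable_add Bochner_Integration.integrable_abs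
          Bochner_Integration.integrable_diff)
    show "AE x in lborel. norm (p x * ln (p x / q x)) \<le> norm (\<bar>p x - q x\<bar> + \<bar>G x\<bar>)"
      using ge le by (intro AE_I2) (smt (verit) real_norm_def)
  qed measurable
  then show ?thesis
    unfolding KL_def using assms le by (intro integral_mono) auto
qed

lemma KL_mixture_le:
  fixes f h :: "'i \<Rightarrow> real^'n \<Rightarrow> real"
  assumes "finite K" and "\<And>k. k \<in> K \<Longrightarrow> 0 \<le> w k"
    and "\<And>k. k \<in> K \<Longrightarrow> integrable lborel (f k)" "\<And>k. k \<in> K \<Longrightarrow> integrable lborel (h k)"
    and "\<And>k x. k \<in> K \<Longrightarrow> 0 \<le> f k x" "\<And>k x. k \<in> K \<Longrightarrow> 0 \<le> h k x"
    and "\<And>k x. k \<in> K \<Longrightarrow> h k x = 0 \<Longrightarrow> f k x = 0"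
    and KL_int: "\<And>k. k \<in> K \<Longrightarrow> integrable lborel (\<lambda>x. f k x * ln (f k x / h k x))"
  shows "KL (\<lambda>x. \<Sum>k\<in>K. w k * f k x) (\<lambda>x. \<Sum>k\<in>K. w k * h k x)
           \<le> (\<Sum>k\<in>K. w k * KL (f k) (h k))"
proof -
  have scale: "(c * a) * ln ((c * a) / (c * b)) = c * (a * ln (a / b))" for a b c :: real
    by (cases "c = 0") simp_all
  have "(\<Sum>k\<in>K. w k * f k x) * ln ((\<Sum>k\<in>K. w k * f k x) / (\<Sum>k\<in>K. w k * h k x))
        \<le> (\<Sum>k\<in>K. w k * (f k x * ln (f k x / h k x)))" for x
  proof -
    have "(\<Sum>k\<in>K. w k * f k x) * ln ((\<Sum>k\<in>K. w k * f k x) / (\<Sum>k\<in>K. w k * h k x))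
          \<le> (\<Sum>k\<in>K. (w k * f k x) * ln ((w k * f k x) / (w k * h k x)))"
      using assms by (intro log_sum_inequality) auto
    then show ?thesis by (simp only: scale)
  qed
  then have "KL (\<lambda>x. \<Sum>k\<in>K. w k * f k x) (\<lambda>x. \<Sum>k\<in>K. w k * h k x)
             \<le> integral\<^sup>L lborel (\<lambda>x. \<Sum>k\<in>K. w k * (f k x * ln (f k x / h k x)))"
    using assms by (intro KL_le_integral Bochner_Integration.integrable_sum integrable_mult_right)
      (auto intro: sum_nonneg simp: sum_nonneg_eq_0_iff)
  also have "\<dots> = (\<Sum>k\<in>K. w k * KL (f k) (h k))"
    using KL_int unfolding KL_def by (simp add: integral_sum)
  finally show ?thesis .
qed

lemma dsKL_mixture_le:
  fixes f h :: "'i \<Rightarrow> real^'n \<Rightarrow> real"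
  assumes "finite K" and "\<And>k. k \<in> K \<Longrightarrow> 0 \<le> w k"
    and "\<And>k. k \<in> K \<Longrightarrow> integrable lborel (f k)" "\<And>k. k \<in> K \<Longrightarrow> integrable lborel (h k)"
    and "\<And>k x. k \<in> K \<Longrightarrow> 0 \<le> f k x" "\<And>k x. k \<in> K \<Longrightarrow> 0 \<le> h k x"
    and "\<And>k x. k \<in> K \<Longrightarrow> f k x = 0 \<longleftrightarrow> h k x = 0"
    and "\<And>k. k \<in> K \<Longrightarrow> integrable lborel (\<lambda>x. f k x * ln (f k x / h k x))"
    and "\<And>k. k \<in> K \<Longrightarrow> integrable lborel (\<lambda>x. h k x * ln (h k x / f k x))"
  shows "dsKL (\<lambda>x. \<Sum>k\<in>K. w k * f k x) (\<lambda>x. \<Sum>k\<in>K. w k * h k x)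
           \<le> (\<Sum>k\<in>K. w k * dsKL (f k) (h k))"
proof -
  have "KL (\<lambda>x. \<Sum>k\<in>K. w k * f k x) (\<lambda>x. \<Sum>k\<in>K. w k * h k x) \<le> (\<Sum>k\<in>K. w k * KL (f k) (h k))"
    by (rule KL_mixture_le) (use assms in auto)
  moreover have "KL (\<lambda>x. \<Sum>k\<in>K. w k * h k x) (\<lambda>x. \<Sum>k\<in>K. w k * f k x) \<le> (\<Sum>k\<in>K. w k * KL (h k) (f k))"
    by (rule KL_mixture_le) (use assms in auto)
  ultimately show ?thesis
    unfolding dsKL_def by (simp add: distrib_left sum.distrib)
qed

lemma dsKL_self [simp]: "dsKL f f = 0"
  unfolding dsKL_def KL_def mult_ln_div_self by simp

lemma dsKL_merge_pair_le:
  fixes f :: "'i \<Rightarrow> real^'n \<Rightarrow> real" and g :: "real^'n \<Rightarrow> real"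
  assumes "finite K" "i \<in> K" "j \<in> K" "i \<noteq> j" and "\<And>k. k \<in> K \<Longrightarrow> 0 \<le> w k"
    and "\<And>k. k \<in> K \<Longrightarrow> integrable lborel (f k)" "\<And>k x. k \<in> K \<Longrightarrow> 0 \<le> f k x"
    and "integrable lborel g"
    and pos: "\<And>x. 0 < g x" "\<And>x. 0 < f i x" "\<And>x. 0 < f j x"
    and KL_int: "integrable lborel (\<lambda>x. f i x * ln (f i x / g x))"
      "integrable lborel (\<lambda>x. g x * ln (g x / f i x))"
      "integrable lborel (\<lambda>x. f j x * ln (f j x / g x))"
      "integrable lborel (\<lambda>x. g x * ln (g x / f j x))"
  shows "dsKL (\<lambda>x. \<Sum>k\<in>K. w k * f k x) (\<lambda>x. (\<Sum>k\<in>K - {i, j}. w k * f k x) + (w i + w j) * g x)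
           \<le> w i * dsKL (f i) g + w j * dsKL (f j) g"
proof -
  \<comment> \<open>The merged mixture has the same weights, with both components \<open>i\<close> and \<open>j\<close> replaced by \<open>g\<close>.\<close>
  define h where "h k = (if k \<in> {i, j} then g else f k)" for k
  have split: "sum u K = sum u (K - {i, j}) + u i + u j" for u :: "'i \<Rightarrow> real"
    using assms by (simp add: sum.subset_diff[of "{i, j}" K])
  have merged: "(\<lambda>x. \<Sum>k\<in>K. w k * h k x) = (\<lambda>x. (\<Sum>k\<in>K - {i, j}. w k * f k x) + (w i + w j) * g x)"
    using split assms(4) by (simp add: h_def algebra_simps)
  have "dsKL (\<lambda>x. \<Sum>k\<in>K. w k * f k x) (\<lambda>x. \<Sum>k\<in>K. w k * h k x)
          \<le> (\<Sum>k\<in>K. w k * dsKL (f k) (h k))"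
  proof (rule dsKL_mixture_le)
    fix k x assume k: "k \<in> K"
    show "integrable lborel (h k)" "0 \<le> h k x"
      using assms k by (simp_all add: h_def less_imp_le)
    show "f k x = 0 \<longleftrightarrow> h k x = 0"
      using pos[of x] by (auto simp: h_def)
    show "integrable lborel (\<lambda>x. f k x * ln (f k x / h k x))"
      "integrable lborel (\<lambda>x. h k x * ln (h k x / f k x))"
      using KL_int by (auto simp: h_def simp del: divide_self_if)
  qed (use assms in auto)
  also have "(\<Sum>k\<in>K. w k * dsKL (f k) (h k)) = w i * dsKL (f i) g + w j * dsKL (f j) g"
    using split assms(4) by (simp add: h_def)
  finally show ?thesis unfolding merged .
qed

section \<open>Positive definite quadratic forms\<close>

definition quadratic_form_pos :: "real^'n^'n \<Rightarrow> bool" where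
  "quadratic_form_pos S \<longleftrightarrow> (\<forall>v. v \<noteq> 0 \<longrightarrow> 0 < v \<bullet> (S *v v))"

lemma pos_def_mat_imp_quadratic_form_pos: "pos_def_mat S \<Longrightarrow> quadratic_form_pos S"
  unfolding pos_def_mat_def quadratic_form_pos_def by blast

lemma quadratic_form_pos_invertible:
  assumes "quadratic_form_pos S" shows "invertible S"
proof -
  have "inj ((*v) S)"
  proof (rule injI)
    fix x y assume "S *v x = S *v y"
    then have "(x - y) \<bullet> (S *v (x - y)) = 0" by (simp add: matrix_vector_mult_diff_distrib)
    then show "x = y" using assms unfolding quadratic_form_pos_def
      by (metis less_irrefl right_minus_eq)
  qed
  then show ?thesis
    using matrix_left_invertible_injective invertible_left_inverse by blast
qed

lemma matrix_mul_matrix_inv: "invertible A \<Longrightarrow> A ** matrix_inv A = mat 1"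
  unfolding invertible_def matrix_inv_def by (rule someI2_ex) auto

lemma quadratic_form_pos_matrix_inv:
  fixes S :: "real^'n^'n"
  assumes "quadratic_form_pos S" shows "quadratic_form_pos (matrix_inv S)"
  unfolding quadratic_form_pos_def
proof (intro allI impI)
  fix y :: "real^'n" assume "y \<noteq> 0"
  define w where "w = matrix_inv S *v y"
  have Sw: "S *v w = y"
    unfolding w_def matrix_vector_mul_assoc
    using matrix_mul_matrix_inv[OF quadratic_form_pos_invertible[OF assms]] by simp
  then have "w \<noteq> 0" using \<open>y \<noteq> 0\<close> by auto
  then have "0 < w \<bullet> (S *v w)" using assms unfolding quadratic_form_pos_def by blast
  then show "0 < y \<bullet> (matrix_inv S *v y)" using Sw by (simp add: w_def inner_commute)
qed

lemma quadratic_form_pos_coercive: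
  fixes S :: "real^'n^'n"
  assumes "quadratic_form_pos S" obtains c where "0 < c" "\<And>v. c * (norm v)\<^sup>2 \<le> v \<bullet> (S *v v)"
proof -
  let ?Q = "\<lambda>v::real^'n. v \<bullet> (S *v v)"
  have "continuous_on (sphere 0 1) ?Q"
    by (intro continuous_intros linear_continuous_on matrix_vector_mul_bounded_linear)
  moreover have "sphere (0::real^'n) 1 \<noteq> {}" by simp
  ultimately obtain u where u: "u \<in> sphere 0 1" "\<And>v. v \<in> sphere 0 1 \<Longrightarrow> ?Q u \<le> ?Q v"
    using continuous_attains_inf[OF compact_sphere] by blast
  have "u \<noteq> 0" using u(1) by auto
  then have "0 < ?Q u" using assms unfolding quadratic_form_pos_def by blast
  moreover have "?Q u * (norm v)\<^sup>2 \<le> ?Q v" for v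
  proof (cases "v = 0")
    case False
    have "?Q u \<le> ?Q (v /\<^sub>R norm v)" using False by (intro u(2)) simp
    also have "\<dots> = ?Q v / (norm v)\<^sup>2"
      by (simp add: matrix_vector_mult_scaleR power2_eq_square divide_inverse)
    finally show ?thesis using False by (simp add: field_simps)
  qed simp
  ultimately show ?thesis using that by blast
qed

lemma quadratic_form_abs_le:
  fixes S :: "real^'n^'n"
  obtains C where "0 < C" "\<And>v. \<bar>v \<bullet> (S *v v)\<bar> \<le> C * (norm v)\<^sup>2"
proof -
  obtain B where "0 < B" and B: "\<And>x. norm (S *v x) \<le> norm x * B"
    using bounded_linear.pos_bounded[OF matrix_vector_mul_bounded_linear] by blast
  have "\<bar>v \<bullet> (S *v v)\<bar> \<le> B * (norm v)\<^sup>2" for v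
  proof -
    have "\<bar>v \<bullet> (S *v v)\<bar> \<le> norm v * norm (S *v v)" by (rule Cauchy_Schwarz_ineq2)
    also have "\<dots> \<le> norm v * (norm v * B)" by (intro mult_left_mono B) simp
    finally show ?thesis by (simp add: power2_eq_square algebra_simps)
  qed
  then show ?thesis using that \<open>0 < B\<close> by blast
qed

lemma quadratic_form_pos_det_pos:
  fixes S :: "real^'n^'n"
  assumes "quadratic_form_pos S" shows "0 < det S"
proof (rule ccontr)
  \<comment> \<open>Otherwise \<open>det\<close> vanishes somewhere on the segment from \<open>mat 1\<close> to \<open>S\<close>, all of whose points are positive definite.\<close>
  assume "\<not> 0 < det S"
  define M where "M t = (1 - t) *\<^sub>R mat 1 + t *\<^sub>R S" for t :: real
  have "continuous_on {0..1} (\<lambda>t. det (M t))"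
    unfolding M_def det_def by (intro continuous_intros)
  then obtain t where t: "0 \<le> t" "t \<le> 1" "det (M t) = 0"
    using IVT2'[of "\<lambda>t. det (M t)" 1 0 0] \<open>\<not> 0 < det S\<close> by (force simp: M_def)
  have "quadratic_form_pos (M t)"
    unfolding quadratic_form_pos_def
  proof (intro allI impI)
    fix v :: "real^'n" assume "v \<noteq> 0"
    then have "0 < v \<bullet> v" "0 < v \<bullet> (S *v v)"
      using assms unfolding quadratic_form_pos_def by auto
    then have "0 < (1 - t) * (v \<bullet> v) + t * (v \<bullet> (S *v v))"
      using t by (cases "t = 0") (auto intro: add_nonneg_pos)
    then show "0 < v \<bullet> (M t *v v)"
      by (simp add: M_def matrix_vector_mult_add_rdistrib scaleR_matrix_vector_assoc[symmetric] inner_add_right)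
  qed
  then show False
    using quadratic_form_pos_invertible invertible_det_nz t(3) by blast
qed

section \<open>Gaussian densities\<close>

lemma gauss_density_normalizer_pos:
  fixes S :: "real^'n^'n"
  assumes "quadratic_form_pos S" shows "0 < sqrt ((2 * pi) ^ CARD('n) * det S)"
  using quadratic_form_pos_det_pos[OF assms] by simp

lemma gauss_density_pos: "quadratic_form_pos S \<Longrightarrow> 0 < gauss_density mu S x"
  unfolding gauss_density_def using gauss_density_normalizer_pos by (intro divide_pos_pos) auto

lemma continuous_on_gauss_density:
  assumes "quadratic_form_pos S" shows "continuous_on UNIV (gauss_density mu S)"
proof -
  have "continuous_on UNIV (\<lambda>x. matrix_inv S *v (x - mu))"
    by (intro linear_continuous_on_compose[OF _ matrix_vector_mul_linear] continuous_intros)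
  then show ?thesis
    unfolding gauss_density_def using gauss_density_normalizer_pos[OF assms]
    by (intro continuous_intros) auto
qed

lemma borel_measurable_gauss_density [measurable]:
  "quadratic_form_pos S \<Longrightarrow> gauss_density mu S \<in> borel_measurable lborel"
  using borel_measurable_continuous_onI[OF continuous_on_gauss_density] by simp

lemma power2_norm_le_shift:
  fixes x m :: "'a::real_normed_vector"
  shows "(norm x)\<^sup>2 \<le> 2 * (norm (x - m))\<^sup>2 + 2 * (norm m)\<^sup>2"
proof -
  have "norm x \<le> norm (x - m) + norm m" using norm_triangle_ineq[of "x - m" m] by simp
  then have "(norm x)\<^sup>2 \<le> (norm (x - m) + norm m)\<^sup>2" by (simp add: power_mono)
  also have "\<dots> \<le> 2 * (norm (x - m))\<^sup>2 + 2 * (norm m)\<^sup>2"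
    using sum_squares_ge_zero[of "norm (x - m) - norm m" 0] by (simp add: power2_eq_square algebra_simps)
  finally show ?thesis .
qed

lemma gauss_density_le_exp:
  fixes S :: "real^'n^'n"
  assumes "quadratic_form_pos S"
  obtains K c where "0 < c" "\<And>x. gauss_density mu S x \<le> K * exp (- c * (norm x)\<^sup>2)"
proof -
  obtain c where c: "0 < c" "\<And>v. c * (norm v)\<^sup>2 \<le> v \<bullet> (matrix_inv S *v v)"
    using quadratic_form_pos_coercive[OF quadratic_form_pos_matrix_inv[OF assms]] by blast
  define D where "D = sqrt ((2 * pi) ^ CARD('n) * det S)"
  have "0 < D" unfolding D_def using gauss_density_normalizer_pos[OF assms] .
  have "gauss_density mu S x \<le> exp (c/2 * (norm mu)\<^sup>2) / D * exp (- (c/4) * (norm x)\<^sup>2)" for x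
  proof -
    have "- (1/2) * ((x - mu) \<bullet> (matrix_inv S *v (x - mu))) \<le> c/2 * (norm mu)\<^sup>2 + - (c/4) * (norm x)\<^sup>2"
      using c(2)[of "x - mu"] mult_left_mono[OF power2_norm_le_shift[of x mu], of c] c(1)
      by (simp add: algebra_simps)
    then have "exp (- (1/2) * ((x - mu) \<bullet> (matrix_inv S *v (x - mu))))
                 \<le> exp (c/2 * (norm mu)\<^sup>2) * exp (- (c/4) * (norm x)\<^sup>2)"
      by (simp add: exp_add[symmetric])
    then show ?thesis
      unfolding gauss_density_def D_def[symmetric] using \<open>0 < D\<close> by (simp add: field_simps)
  qed
  moreover have "0 < c / 4" using c by simp
  ultimately show ?thesis using that by blast
qed

lemma abs_ln_gauss_density_le:
  fixes S :: "real^'n^'n"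
  assumes "quadratic_form_pos S"
  obtains K where "\<And>x. \<bar>ln (gauss_density mu S x)\<bar> \<le> K * (1 + (norm x)\<^sup>2)"
proof -
  obtain C where "0 \<le> C" and C: "\<And>v. \<bar>v \<bullet> (matrix_inv S *v v)\<bar> \<le> C * (norm v)\<^sup>2"
    using quadratic_form_abs_le less_imp_le by metis
  define D where "D = sqrt ((2 * pi) ^ CARD('n) * det S)"
  have "0 < D" unfolding D_def using gauss_density_normalizer_pos[OF assms] .
  have "\<bar>ln (gauss_density mu S x)\<bar> \<le> (C + C * (norm mu)\<^sup>2 + \<bar>ln D\<bar>) * (1 + (norm x)\<^sup>2)" for x
  proof -
    let ?Q = "(x - mu) \<bullet> (matrix_inv S *v (x - mu))"
    have "ln (gauss_density mu S x) = - (1/2) * ?Q - ln D"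
      unfolding gauss_density_def D_def[symmetric] using \<open>0 < D\<close> by (simp add: ln_div)
    moreover have "\<bar>?Q\<bar> \<le> C * (2 * (norm x)\<^sup>2 + 2 * (norm mu)\<^sup>2)"
      using C[of "x - mu"] mult_left_mono[OF power2_norm_le_shift[of "x - mu" "- mu"] \<open>0 \<le> C\<close>]
      by simp
    moreover have "0 \<le> (C * (norm mu)\<^sup>2 + \<bar>ln D\<bar>) * (norm x)\<^sup>2 + C" using \<open>0 \<le> C\<close> by simp
    ultimately show ?thesis by (simp add: algebra_simps abs_if split: if_splits)
  qed
  then show ?thesis using that by blast
qed

lemma integrable_exp_neg_sq:
  assumes "0 < a" shows "integrable lborel (\<lambda>t::real. exp (- a * t\<^sup>2))"
proof -
  define s where "s = 1 / sqrt (2 * a)"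
  have "0 < s" "2 * s\<^sup>2 = 1 / a" using assms unfolding s_def by (simp_all add: power_divide)
  then have "exp (- a * t\<^sup>2) = sqrt (2 * pi * s\<^sup>2) * normal_density 0 s t" for t
    using assms unfolding normal_density_def by simp
  then show ?thesis
    using integrable_normal_density[OF \<open>0 < s\<close>, of 0] by (simp add: integrable_mult_right)
qed

lemma integrable_exp_neg_norm_sq:
  assumes "0 < a" shows "integrable lborel (\<lambda>x::'a::euclidean_space. exp (- a * (norm x)\<^sup>2))"
proof (rule integrableI_nonneg)
  have "exp (- a * (norm x)\<^sup>2) = (\<Prod>b\<in>Basis. exp (- a * (x \<bullet> b)\<^sup>2))" for x :: 'a
    unfolding power2_norm_eq_inner euclidean_inner[of x x]
    by (simp add: exp_sum sum_distrib_left power2_eq_square)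
  then have factor: "ennreal (exp (- a * (norm x)\<^sup>2)) = (\<Prod>b\<in>Basis. ennreal (exp (- a * (x \<bullet> b)\<^sup>2)))"
    for x :: 'a
    by (simp only: prod_ennreal exp_ge_zero)
  have "(\<integral>\<^sup>+x. ennreal (exp (- a * (norm (x::'a))\<^sup>2)) \<partial>lborel)
      = (\<integral>\<^sup>+x. (\<Prod>b\<in>(Basis::'a set). ennreal (exp (- a * (x \<bullet> b)\<^sup>2))) \<partial>lborel)"
    by (simp only: factor)
  also have "\<dots> = (\<Prod>b\<in>(Basis::'a set). \<integral>\<^sup>+t. ennreal (exp (- a * t\<^sup>2)) \<partial>lborel)"
    by (rule nn_integral_lborel_prod) auto
  also have "(\<integral>\<^sup>+t. ennreal (exp (- a * t\<^sup>2)) \<partial>lborel) = ennreal (\<integral>t. exp (- a * t\<^sup>2) \<partial>lborel)"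
    by (rule nn_integral_eq_integral[OF integrable_exp_neg_sq[OF assms]]) auto
  also have "(\<Prod>b\<in>(Basis::'a set). ennreal (\<integral>t. exp (- a * t\<^sup>2) \<partial>lborel)) < \<infinity>"
    by (simp add: power_less_top_ennreal)
  finally show "(\<integral>\<^sup>+x. ennreal (exp (- a * (norm (x::'a))\<^sup>2)) \<partial>lborel) < \<infinity>" .
qed auto

lemma integrable_gauss_density_second_moment:
  fixes S :: "real^'n^'n"
  assumes "quadratic_form_pos S"
  shows "integrable lborel (\<lambda>x. gauss_density mu S x * (1 + (norm x)\<^sup>2))"
proof -
  obtain K c where c: "0 < c" "\<And>x. gauss_density mu S x \<le> K * exp (- c * (norm x)\<^sup>2)"
    using gauss_density_le_exp[OF assms] by blast
  have "0 \<le> K" using c(2)[of 0] gauss_density_pos[OF assms, of mu 0] by (simp add: zero_le_mult_iff)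
  show ?thesis
  proof (rule Bochner_Integration.integrable_bound)
    show "integrable lborel (\<lambda>x::real^'n. K * (1 + 2/c) * exp (- (c/2) * (norm x)\<^sup>2))"
      using c by (intro integrable_mult_right integrable_exp_neg_norm_sq) simp
    show "AE x in lborel. norm (gauss_density mu S x * (1 + (norm x)\<^sup>2))
            \<le> norm (K * (1 + 2/c) * exp (- (c/2) * (norm x)\<^sup>2))"
    proof (rule AE_I2)
      fix x :: "real^'n"
      let ?s = "(norm x)\<^sup>2"
      have "1 \<le> exp (c/2 * ?s)" using c(1) by simp
      moreover have "c/2 * ?s \<le> exp (c/2 * ?s)" using exp_ge_add_one_self[of "c/2 * ?s"] by linarith
      then have "?s \<le> 2/c * exp (c/2 * ?s)" using c(1) by (simp add: field_simps)
      ultimately have "1 + ?s \<le> (1 + 2/c) * exp (c/2 * ?s)"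
        using distrib_right[of 1 "2/c" "exp (c/2 * ?s)"] by linarith
      then have "gauss_density mu S x * (1 + ?s) \<le> K * exp (- c * ?s) * ((1 + 2/c) * exp (c/2 * ?s))"
        using c \<open>0 \<le> K\<close> gauss_density_pos[OF assms, of mu x] by (intro mult_mono) auto
      also have "\<dots> = K * (1 + 2/c) * exp (- (c/2) * ?s)"
        by (simp add: exp_add[symmetric] algebra_simps)
      finally show "norm (gauss_density mu S x * (1 + ?s)) \<le> norm (K * (1 + 2/c) * exp (- (c/2) * ?s))"
        using gauss_density_pos[OF assms, of mu x] by simp
    qed
  qed (use assms in measurable)
qed

lemma integrable_gauss_density:
  assumes "quadratic_form_pos S" shows "integrable lborel (gauss_density mu S)"
proof (rule Bochner_Integration.integrable_bound[OF integrable_gauss_density_second_moment[OF assms]])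
  show "AE x in lborel. norm (gauss_density mu S x) \<le> norm (gauss_density mu S x * (1 + (norm x)\<^sup>2))"
    using gauss_density_pos[OF assms] by (intro AE_I2) (simp add: abs_mult mult_le_cancel_left1)
qed (use assms in measurable)

lemma integrable_gauss_KL_integrand:
  assumes "quadratic_form_pos S1" "quadratic_form_pos S2"
  shows "integrable lborel (\<lambda>x. gauss_density m1 S1 x * ln (gauss_density m1 S1 x / gauss_density m2 S2 x))"
proof -
  obtain K1 K2 where
    K1: "\<And>x. \<bar>ln (gauss_density m1 S1 x)\<bar> \<le> K1 * (1 + (norm x)\<^sup>2)" and
    K2: "\<And>x. \<bar>ln (gauss_density m2 S2 x)\<bar> \<le> K2 * (1 + (norm x)\<^sup>2)"
    using abs_ln_gauss_density_le[OF assms(1)] abs_ln_gauss_density_le[OF assms(2)] by metis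
  have "0 \<le> K1 + K2" using K1[of 0] K2[of 0] by (simp add: order.trans[OF abs_ge_zero])
  show ?thesis
  proof (rule Bochner_Integration.integrable_bound)
    show "integrable lborel (\<lambda>x. (K1 + K2) * (gauss_density m1 S1 x * (1 + (norm x)\<^sup>2)))"
      by (intro integrable_mult_right integrable_gauss_density_second_moment assms)
    show "AE x in lborel. norm (gauss_density m1 S1 x * ln (gauss_density m1 S1 x / gauss_density m2 S2 x))
            \<le> norm ((K1 + K2) * (gauss_density m1 S1 x * (1 + (norm x)\<^sup>2)))"
    proof (rule AE_I2)
      fix x
      have g: "0 < gauss_density m1 S1 x" "0 < gauss_density m2 S2 x"
        using gauss_density_pos assms by blast+
      then have "\<bar>ln (gauss_density m1 S1 x / gauss_density m2 S2 x)\<bar> \<le> (K1 + K2) * (1 + (norm x)\<^sup>2)"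
        using K1[of x] K2[of x] by (simp add: ln_div algebra_simps)
      then show "norm (gauss_density m1 S1 x * ln (gauss_density m1 S1 x / gauss_density m2 S2 x))
            \<le> norm ((K1 + K2) * (gauss_density m1 S1 x * (1 + (norm x)\<^sup>2)))"
        using g \<open>0 \<le> K1 + K2\<close> by (simp add: abs_mult mult_left_mono mult.left_commute)
    qed
  qed (use assms in measurable)
qed


section \<open>Merging two Gaussian components\<close>

lemma inner_outer_self: "v \<bullet> (outer d d *v v) = (d \<bullet> v)\<^sup>2"
proof -
  have "outer d d *v v = (d \<bullet> v) *\<^sub>R d"
    by (simp add: vec_eq_iff outer_def matrix_vector_mult_def inner_vec_def sum_distrib_left algebra_simps)
  then show ?thesis by (simp add: inner_commute power2_eq_square)
qed

lemma quadratic_form_pos_merged_covariance: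
  fixes Si Sj :: "real^'n^'n" and li lj :: real
  assumes "0 \<le> li" "0 \<le> lj" "0 < li + lj" "quadratic_form_pos Si" "quadratic_form_pos Sj"
  shows "quadratic_form_pos ((1 / (li + lj)) *\<^sub>R (li *\<^sub>R Si + lj *\<^sub>R Sj + (li * lj) *\<^sub>R outer d d))"
  unfolding quadratic_form_pos_def
proof (intro allI impI)
  fix v :: "real^'n" assume "v \<noteq> 0"
  then have "0 < v \<bullet> (Si *v v)" "0 < v \<bullet> (Sj *v v)"
    using assms unfolding quadratic_form_pos_def by auto
  then have "0 < li * (v \<bullet> (Si *v v)) + lj * (v \<bullet> (Sj *v v)) + (li * lj) * (d \<bullet> v)\<^sup>2"
    using assms by (smt (verit) mult_nonneg_nonneg mult_pos_pos zero_le_power2)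
  then show "0 < v \<bullet> (((1 / (li + lj)) *\<^sub>R (li *\<^sub>R Si + lj *\<^sub>R Sj + (li * lj) *\<^sub>R outer d d)) *v v)"
    using assms(3) by (simp add: scaleR_matrix_vector_assoc[symmetric] matrix_vector_mult_add_rdistrib
        inner_add_right inner_outer_self)
qed

lemma prob_density_integrable: "prob_density f \<Longrightarrow> integrable lborel f"
  unfolding prob_density_def by (intro integrableI_nonneg) auto

theorem mainTheorem3:
  fixes n :: nat and i j :: nat
    and lam :: "nat \<Rightarrow> real"
    and pk :: "nat \<Rightarrow> real^'d \<Rightarrow> real"
    and mu :: "nat \<Rightarrow> real^'d" and Sig :: "nat \<Rightarrow> real^'d^'d"
  assumes lam_nonneg: "\<forall>k\<in>{1..n}. 0 \<le> lam k"
    and lam_sum: "(\<Sum>k\<in>{1..n}. lam k) = 1"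
    and dens: "\<forall>k\<in>{1..n}. prob_density (pk k)"
    and ij: "i \<in> {1..n}" "j \<in> {1..n}" "i \<noteq> j"
    and lam_ij_pos: "lam i + lam j > 0"
    and Sig_i: "pos_def_mat (Sig i)" and Sig_j: "pos_def_mat (Sig j)"
    and gauss_i: "pk i = gauss_density (mu i) (Sig i)"
    and gauss_j: "pk j = gauss_density (mu j) (Sig j)"
  shows
    "let lij = lam i + lam j;
         muij = (lam i / lij) *\<^sub>R mu i + (lam j / lij) *\<^sub>R mu j;
         Sigij = (1 / lij) *\<^sub>R (lam i *\<^sub>R Sig i + lam j *\<^sub>R Sig j
                   + (lam i * lam j) *\<^sub>R outer (mu i - mu j) (mu i - mu j));
         pij = gauss_density muij Sigij;
         p = (\<lambda>x. \<Sum>k\<in>{1..n}. lam k * pk k x);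
         papp = (\<lambda>x. (\<Sum>k\<in>{1..n} - {i, j}. lam k * pk k x) + lij * pij x)
     in dsKL p papp \<le> lam i * dsKL (pk i) pij + lam j * dsKL (pk j) pij"
proof -
  \<comment> \<open>The bound is homogeneous in the weights.\<close>
  define muij Sigij where
    "muij = (lam i / (lam i + lam j)) *\<^sub>R mu i + (lam j / (lam i + lam j)) *\<^sub>R mu j" and
    "Sigij = (1 / (lam i + lam j)) *\<^sub>R (lam i *\<^sub>R Sig i + lam j *\<^sub>R Sig j
                   + (lam i * lam j) *\<^sub>R outer (mu i - mu j) (mu i - mu j))"
  have Si: "quadratic_form_pos (Sig i)" and Sj: "quadratic_form_pos (Sig j)"
    using Sig_i Sig_j by (simp_all add: pos_def_mat_imp_quadratic_form_pos)
  have Sij: "quadratic_form_pos Sigij"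
    unfolding Sigij_def using lam_nonneg ij lam_ij_pos Si Sj
    by (intro quadratic_form_pos_merged_covariance) auto
  have "dsKL (\<lambda>x. \<Sum>k\<in>{1..n}. lam k * pk k x)
          (\<lambda>x. (\<Sum>k\<in>{1..n} - {i, j}. lam k * pk k x) + (lam i + lam j) * gauss_density muij Sigij x)
        \<le> lam i * dsKL (pk i) (gauss_density muij Sigij) + lam j * dsKL (pk j) (gauss_density muij Sigij)"
    using lam_nonneg dens ij Si Sj Sij
    by (intro dsKL_merge_pair_le)
      (auto simp: gauss_i gauss_j prob_density_integrable prob_density_def gauss_density_pos
        integrable_gauss_density integrable_gauss_KL_integrand)
  then show ?thesis unfolding muij_def Sigij_def Let_def .
qed

end
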